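(* Let $k\ge 1$ and $n\ge 1$ be integers and let $$D_n(k,x)=\left(\binom{i+k-1}{j+k-1}x^k-\binom{i}{j-1}\right)_{i,j=0}^{n-1}.$$ Then $\det D_n(k,x)=x^nF^{(k)}_{(k-1)n}(x)$.
   Context: Binomial coefficients: for integers $m\ge 0$ and $j$, $\binom{m}{j}$ is the usual binomial coefficient, with $\binom{m}{j}=0$ if $j<0$ or $j>m$. For an integer $k\ge1$, the generalized Fibonacci polynomials $F^{(k)}_n(x)\in\mathbb{Z}[x]$ ($n\ge0$) are defined by $F^{(k)}_n(x)=x^n$ for $0\le n<k$ and $F^{(k)}_n(x)=xF^{(k)}_{n-1}(x)+F^{(k)}_{n-k}(x)$ for $n\ge k$. *)

theory Defs
  imports "HOL-Computational_Algebra.Polynomial" "Jordan_Normal_Form.Determinant"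
begin

function genfib :: "nat \<Rightarrow> nat \<Rightarrow> int poly" where
  "genfib k n = (if k = 0 then 0 else if n < k then monom 1 n
                 else pCons 0 (genfib k (n - 1)) + genfib k (n - k))"
  by auto
termination
  by (relation "measure snd") auto

definition binomz :: "nat \<Rightarrow> int \<Rightarrow> int" where
  "binomz m j = (if j < 0 then 0 else int (m choose nat j))"

definition Dmat :: "nat \<Rightarrow> nat \<Rightarrow> int poly mat" where
  "Dmat n k = mat n n (\<lambda>(i, j).
     smult (binomz (i + k - 1) (int j + int k - 1)) (monom 1 k)
     - [: binomz i (int j - 1) :])"

end

theory Submission
  imports Defs
begin

text \<open>The polynomials u_m = \<Sum>_j C((k-1)j, m-j) x^(kj) (\<open>null_vec k m\<close>), with u_0 = 1, are a
  null vector of the infinite matrix whose (i, j) entry is given by the formula of D_n(k,x)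
  (\<open>dentry k i j\<close>): each row sum \<Sum>_m D_im u_m vanishes by two Vandermonde convolutions. Row i
  vanishes right of the superdiagonal, where its entry is -1. Adding u_m times column m to column 0
  of D_n(k,x) therefore leaves u_n as the only nonzero entry of column 0, in the last row, and the
  complementary minor is lower triangular with determinant (-1)^(n-1); hence det D_n(k,x) = u_n.
  Finally F^(k)_N has coefficient C(a+j, j) at x^a if N = a + kj and 0 otherwise, which identifies
  u_n with x^n F^(k)_((k-1)n).\<close>

lemma det_by_kernel_column:
  fixes A :: "'a :: comm_ring_1 mat"
  assumes A: "A \<in> carrier_mat (Suc m) (Suc m)" and x: "x \<in> carrier_vec (Suc m)"
    and x0: "x $ 0 = 1"
    and lower: "\<And>i. i < m \<Longrightarrow> (A *\<^sub>v x) $ i = 0"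
  shows "det A = (-1) ^ m * (A *\<^sub>v x) $ m * det (mat_delete A m 0)"
proof -
  define B where "B = replace_col A (A *\<^sub>v x) 0"
  have B: "B \<in> carrier_mat (Suc m) (Suc m)" using A by (simp add: B_def replace_col_def)
  have minor: "mat_delete B m 0 = mat_delete A m 0"
    using A by (auto simp: B_def replace_col_def mat_delete_def)
  have "det A = det B" using cramer_lemma_mat[OF A x] x0 by (simp add: B_def)
  also have "\<dots> = (\<Sum>i<Suc m. B $$ (i, 0) * cofactor B i 0)"
    by (rule laplace_expansion_column[OF B]) simp
  also have "\<dots> = B $$ (m, 0) * cofactor B m 0"
    using A lower by (simp add: B_def replace_col_def)
  also have "B $$ (m, 0) = (A *\<^sub>v x) $ m"
    using A by (simp add: B_def replace_col_def)
  finally show ?thesis by (simp add: cofactor_def minor)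
qed

lemma binomz_neg [simp]: "b < 0 \<Longrightarrow> binomz a b = 0"
  by (simp add: binomz_def)

lemma binomz_eq_0: "int a < b \<Longrightarrow> binomz a b = 0"
  by (simp add: binomz_def)

lemma binomz_of_nat [simp]: "binomz a (int b) = int (a choose b)"
  by (simp add: binomz_def)

lemma binomz_symmetric: "binomz a b = binomz a (int a - b)"
proof (cases "0 \<le> b \<and> b \<le> int a")
  case True
  define q where "q = nat b"
  have q: "b = int q" "q \<le> a" using True by (simp_all add: q_def nat_le_iff)
  have "int a - b = int (a - q)" using q by simp
  then have "binomz a (int a - b) = int (a choose (a - q))" by simp
  then show ?thesis using q by (simp add: binomial_symmetric[OF q(2)])
next
  case False
  then show ?thesis by (auto simp: binomz_eq_0 not_le)
qed

lemma binomz_vandermonde: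
  assumes "c \<le> int R"
  shows "(\<Sum>m\<le>R. binomz a (int m - int p) * binomz b (c - int m)) = binomz (a + b) (c - int p)"
proof (cases "c < int p")
  case True
  then have vanish: "binomz a (int m - int p) * binomz b (c - int m) = 0" for m
    by (cases "m < p") auto
  show ?thesis using True by (simp only: vanish sum.neutral_const) simp
next
  case False
  define r where "r = nat (c - int p)"
  have c: "c = int p + int r" using False r_def by simp
  let ?g = "\<lambda>m. binomz a (int m - int p) * binomz b (c - int m)"
  have "sum ?g {..R} = sum ?g {p..p + r}"
    by (rule sum.mono_neutral_right) (use assms c in auto)
  also have "\<dots> = sum (\<lambda>q. ?g (q + p)) {0..r}"
    using sum.shift_bounds_cl_nat_ivl[of ?g 0 p r] by (simp add: add.commute)
  also have "\<dots> = (\<Sum>q\<le>r. int ((a choose q) * (b choose (r - q))))"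
  proof (rule sum.cong)
    fix q assume "q \<in> {..r}"
    then have "c - int (q + p) = int (r - q)" using c by auto
    then show "?g (q + p) = int ((a choose q) * (b choose (r - q)))" by simp
  qed (auto simp: atLeast0AtMost)
  also have "\<dots> = int (a + b choose r)"
    by (simp only: of_nat_sum[symmetric] vandermonde)
  finally show ?thesis using c by simp
qed

lemma genfib_less: "N < k \<Longrightarrow> genfib k N = monom 1 N"
  by (subst genfib.simps) simp

lemma genfib_rec:
  "1 \<le> k \<Longrightarrow> k \<le> N \<Longrightarrow> genfib k N = pCons 0 (genfib k (N - 1)) + genfib k (N - k)"
  by (subst genfib.simps) simp

declare genfib.simps [simp del]

lemma coeff_genfib_rec:
  assumes "1 \<le> k" "k \<le> N"
  shows "coeff (genfib k N) a =
    (case a of 0 \<Rightarrow> 0 | Suc b \<Rightarrow> coeff (genfib k (N - 1)) b) + coeff (genfib k (N - k)) a"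
  using assms by (simp add: genfib_rec coeff_pCons split: nat.split)

lemma coeff_genfib_eq_0:
  assumes k: "1 \<le> k" and nz: "coeff (genfib k N) a \<noteq> 0"
  shows "\<exists>j. N = a + k * j"
  using nz
proof (induction N arbitrary: a rule: less_induct)
  case (less N)
  show ?case
  proof (cases "N < k")
    case True
    then have "N = a + k * 0" using less.prems by (simp add: genfib_less split: if_splits)
    then show ?thesis ..
  next
    case False
    then have N: "k \<le> N" by simp
    show ?thesis
    proof (cases "coeff (genfib k (N - k)) a = 0")
      case True
      then obtain b where a: "a = Suc b" and "coeff (genfib k (N - 1)) b \<noteq> 0"
        using less.prems coeff_genfib_rec[OF k N, of a] by (cases a) auto
      then obtain j where "N - 1 = b + k * j" using less.IH[of "N - 1"] k N by fastforce
      then have "N = a + k * j" using a k N by simp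
      then show ?thesis ..
    next
      case False
      then obtain j where "N - k = a + k * j" using less.IH[of "N - k"] k N by fastforce
      then have "N = a + k * Suc j" using N by simp
      then show ?thesis ..
    qed
  qed
qed

lemma coeff_genfib:
  assumes k: "1 \<le> k"
  shows "coeff (genfib k (a + k * j)) a = int (a + j choose j)"
proof (induction "a + k * j" arbitrary: a j rule: less_induct)
  case less
  show ?case
  proof (cases "a + k * j < k")
    case True
    then have "j = 0" by (cases j) auto
    then show ?thesis using True by (simp add: genfib_less)
  next
    case False
    then have N: "k \<le> a + k * j" by simp
    show ?thesis
    proof (cases a)
      case 0
      then obtain j' where j: "j = Suc j'" using N k by (cases j) auto
      then show ?thesis
        using coeff_genfib_rec[OF k N, of a] less.hyps[of 0 j'] k 0 by simp
    next
      case (Suc b)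
      have left: "coeff (genfib k (a + k * j - 1)) b = int (b + j choose j)"
        using less.hyps[of b j] Suc k by simp
      show ?thesis
      proof (cases j)
        case 0
        have "coeff (genfib k (a + k * j - k)) a = 0"
          using coeff_genfib_eq_0[OF k, of "a + k * j - k" a] N 0 k by force
        then show ?thesis using coeff_genfib_rec[OF k N, of a] left Suc 0 by simp
      next
        case (Suc j')
        have "coeff (genfib k (a + k * j - k)) a = int (a + j' choose j')"
          using less.hyps[of a j'] Suc k by simp
        then show ?thesis using coeff_genfib_rec[OF k N, of a] left Suc \<open>a = Suc b\<close> by simp
      qed
    qed
  qed
qed

definition null_vec :: "nat \<Rightarrow> nat \<Rightarrow> int poly" where
  "null_vec k m = (\<Sum>j\<le>m. monom (binomz ((k - 1) * j) (int m - int j)) (k * j))"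

lemma null_vec_extend:
  "m \<le> R \<Longrightarrow> null_vec k m = (\<Sum>j\<le>R. monom (binomz ((k - 1) * j) (int m - int j)) (k * j))"
  unfolding null_vec_def by (rule sum.mono_neutral_left) auto

lemma coeff_null_vec_multiple:
  assumes "1 \<le> k" "j \<le> n"
  shows "coeff (null_vec k n) (k * j) = int ((k - 1) * j choose (n - j))"
proof -
  have "coeff (null_vec k n) (k * j) =
      (\<Sum>i\<le>n. if i = j then binomz ((k - 1) * i) (int n - int i) else 0)"
    unfolding null_vec_def coeff_sum using assms by (intro sum.cong) auto
  also have "\<dots> = binomz ((k - 1) * j) (int (n - j))" using assms by simp
  finally show ?thesis by simp
qed

lemma coeff_null_vec_not_multiple:
  assumes "\<not> (\<exists>j\<le>n. d = k * j)"
  shows "coeff (null_vec k n) d = 0"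
  unfolding null_vec_def coeff_sum using assms by (intro sum.neutral) auto

lemma null_vec_eq_genfib:
  assumes k: "1 \<le> k"
  shows "null_vec k n = monom 1 n * genfib k ((k - 1) * n)"
proof (rule poly_eqI)
  fix d
  have kn: "(k - 1) * n + n = k * n" using k by (cases k) auto
  have rhs: "coeff (monom 1 n * genfib k ((k - 1) * n)) d =
      (if d < n then 0 else coeff (genfib k ((k - 1) * n)) (d - n))"
    by (simp add: coeff_monom_mult)
  show "coeff (null_vec k n) d = coeff (monom 1 n * genfib k ((k - 1) * n)) d"
  proof (cases "\<exists>j\<le>n. d = k * j")
    case True
    then obtain j where j: "j \<le> n" "d = k * j" by blast
    have kj: "(k - 1) * j + j = k * j" using k by (cases k) auto
    have "k * j \<le> k * n" using j by simp
    show ?thesis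
    proof (cases "d < n")
      case True
      then have "(k - 1) * j < n - j" using j kj by linarith
      then show ?thesis using coeff_null_vec_multiple[OF k j(1)] rhs True j by simp
    next
      case False
      have "(k - 1) * n = (d - n) + k * (n - j)"
        using False j kj kn \<open>k * j \<le> k * n\<close> by (simp add: diff_mult_distrib2)
      moreover have "(d - n) + (n - j) = (k - 1) * j" using False j kj by linarith
      ultimately show ?thesis
        using coeff_null_vec_multiple[OF k j(1)] coeff_genfib[OF k, of "d - n" "n - j"] rhs False j
        by simp
    qed
  next
    case False
    have "coeff (genfib k ((k - 1) * n)) (d - n) = 0" if "n \<le> d"
    proof (rule ccontr)
      assume "coeff (genfib k ((k - 1) * n)) (d - n) \<noteq> 0"
      then obtain i where i: "(k - 1) * n = (d - n) + k * i" using coeff_genfib_eq_0[OF k] by blast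
      then have "k * i \<le> k * n" using kn that by linarith
      then have "i \<le> n" "d = k * (n - i)" using i kn that k by (auto simp: diff_mult_distrib2)
      then show False using False by (metis diff_le_self)
    qed
    then show ?thesis using coeff_null_vec_not_multiple[OF False] rhs by simp
  qed
qed

definition dentry :: "nat \<Rightarrow> nat \<Rightarrow> nat \<Rightarrow> int poly" where
  "dentry k i j = smult (binomz (i + k - 1) (int j + int k - 1)) (monom 1 k) - [: binomz i (int j - 1) :]"

lemma Dmat_carrier: "Dmat n k \<in> carrier_mat n n"
  by (simp add: Dmat_def)

lemma Dmat_index: "i < n \<Longrightarrow> j < n \<Longrightarrow> Dmat n k $$ (i, j) = dentry k i j"
  by (simp add: Dmat_def dentry_def)

lemma dentry_eq_0: "Suc i < j \<Longrightarrow> dentry k i j = 0"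
  by (simp add: dentry_def binomz_eq_0)

lemma dentry_superdiag: "1 \<le> k \<Longrightarrow> dentry k i (Suc i) = -1"
  by (simp add: dentry_def binomz_eq_0 pCons_one)

lemma dentry_mult_monom:
  "dentry k i m * monom c d =
     monom (binomz (i + k - 1) (int m + int k - 1) * c) (k + d) - monom (binomz i (int m - 1) * c) d"
  by (simp add: dentry_def algebra_simps mult_monom smult_monom flip: monom_0)

text \<open>Expanded, the sum is x^k \<Sum>_j A_j x^(kj) - \<Sum>_j B_j x^(kj) with Vandermonde convolutions
  A_j, B_j; it telescopes because A_j = B_(j+1) and A_(i+1) = B_0 = 0.\<close>
lemma dentry_null_vec_sum:
  assumes k: "1 \<le> k"
  shows "(\<Sum>m\<le>Suc i. dentry k i m * null_vec k m) = 0"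
proof -
  define R where "R = Suc i"
  define A where "A j = binomz ((k - 1) * j + (i + k - 1)) (int i - int j)" for j
  define B where "B j = binomz ((k - 1) * j + i) (int i + 1 - int j)" for j
  have A_conv: "(\<Sum>m\<le>R. binomz (i + k - 1) (int m + int k - 1) * binomz ((k - 1) * j) (int m - int j))
      = A j" for j
  proof -
    have "(\<Sum>m\<le>R. binomz (i + k - 1) (int m + int k - 1) * binomz ((k - 1) * j) (int m - int j))
        = (\<Sum>m\<le>R. binomz ((k - 1) * j) (int m - int j) * binomz (i + k - 1) (int i - int m))"
      by (rule sum.cong[OF refl], subst binomz_symmetric) (use k in simp)
    also have "\<dots> = A j" unfolding A_def by (rule binomz_vandermonde) (simp add: R_def)
    finally show ?thesis .
  qed
  have B_conv: "(\<Sum>m\<le>R. binomz i (int m - 1) * binomz ((k - 1) * j) (int m - int j)) = B j" for j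
  proof -
    have "(\<Sum>m\<le>R. binomz i (int m - 1) * binomz ((k - 1) * j) (int m - int j))
        = (\<Sum>m\<le>R. binomz ((k - 1) * j) (int m - int j) * binomz i (int i + 1 - int m))"
      by (rule sum.cong[OF refl], subst binomz_symmetric) (simp add: algebra_simps)
    also have "\<dots> = B j" unfolding B_def by (rule binomz_vandermonde) (simp add: R_def)
    finally show ?thesis .
  qed
  have "(\<Sum>m\<le>R. dentry k i m * null_vec k m) =
     (\<Sum>m\<le>R. \<Sum>j\<le>R.
        monom (binomz (i + k - 1) (int m + int k - 1) * binomz ((k - 1) * j) (int m - int j)) (k + k * j)
      - monom (binomz i (int m - 1) * binomz ((k - 1) * j) (int m - int j)) (k * j))"
    by (rule sum.cong[OF refl], subst null_vec_extend[of _ R])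
      (simp_all add: sum_distrib_left dentry_mult_monom)
  also have "\<dots> = (\<Sum>j\<le>R. monom (A j) (k + k * j) - monom (B j) (k * j))"
    by (subst sum.swap) (simp only: sum_subtractf A_conv B_conv flip: monom_sum)
  also have "\<dots> = 0"
  proof -
    have AB: "A j = B (Suc j)" for j
    proof -
      have "(k - 1) * j + (i + k - 1) = (k - 1) * Suc j + i" using k by (cases k) (auto simp: algebra_simps)
      then show ?thesis unfolding A_def B_def by (simp add: ac_simps)
    qed
    have A_last: "A (Suc i) = 0" unfolding A_def by simp
    have B_0: "B 0 = 0" unfolding B_def by (simp add: binomz_eq_0)
    have "(\<Sum>j\<le>R. monom (A j) (k + k * j)) = (\<Sum>j\<le>i. monom (B (Suc j)) (k * Suc j))"
      unfolding R_def by (simp only: sum.atMost_Suc A_last monom_eq_0 add_0_right) (simp add: AB)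
    also have "\<dots> = (\<Sum>j\<le>R. monom (B j) (k * j))"
      unfolding R_def by (simp only: sum.atMost_Suc_shift B_0) simp
    finally show ?thesis by (simp add: sum_subtractf)
  qed
  finally show ?thesis unfolding R_def .
qed

lemma Dmat_mult_null_vec:
  assumes k: "1 \<le> k" and i: "i < n"
  shows "(Dmat n k *\<^sub>v vec n (null_vec k)) $ i = (if i = n - 1 then null_vec k n else 0)"
proof -
  have "(Dmat n k *\<^sub>v vec n (null_vec k)) $ i = (\<Sum>m<n. dentry k i m * null_vec k m)"
    using i Dmat_carrier[of n k]
    by (auto simp: scalar_prod_def Dmat_index atLeast0LessThan intro!: sum.cong)
  also have "\<dots> = (if i = n - 1 then null_vec k n else 0)"
  proof (cases "i = n - 1")
    case True
    then have n: "n = Suc i" using i by simp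
    have "(\<Sum>m\<le>Suc i. dentry k i m * null_vec k m) = (\<Sum>m<n. dentry k i m * null_vec k m) - null_vec k n"
      by (simp add: n lessThan_Suc_atMost dentry_superdiag[OF k])
    then show ?thesis using True dentry_null_vec_sum[OF k, of i] by simp
  next
    case False
    have "(\<Sum>m<n. dentry k i m * null_vec k m) = (\<Sum>m\<le>Suc i. dentry k i m * null_vec k m)"
      by (rule sum.mono_neutral_right) (use i False in \<open>auto simp: dentry_eq_0\<close>)
    then show ?thesis using False dentry_null_vec_sum[OF k, of i] by simp
  qed
  finally show ?thesis .
qed

lemma det_Dmat_minor:
  assumes k: "1 \<le> k"
  shows "det (mat_delete (Dmat (Suc m) k) m 0) = (-1) ^ m"
proof -
  let ?M = "mat_delete (Dmat (Suc m) k) m 0"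
  have M: "?M \<in> carrier_mat m m" using mat_delete_carrier[OF Dmat_carrier[of "Suc m" k]] by simp
  have M_index: "?M $$ (i, j) = dentry k i (Suc j)" if "i < m" "j < m" for i j
    using that Dmat_carrier[of "Suc m" k] by (simp add: mat_delete_def Dmat_index carrier_matD)
  have "det ?M = prod_list (diag_mat ?M)"
    by (rule det_lower_triangular[OF _ M]) (simp add: M_index dentry_eq_0)
  also have "diag_mat ?M = map (\<lambda>_. -1) [0..<m]"
    using Dmat_carrier[of "Suc m" k]
    by (auto simp: diag_mat_def M_index dentry_superdiag[OF k] carrier_matD)
  finally show ?thesis by (simp add: map_replicate_const)
qed

theorem theorem4:
  fixes k n :: nat
  assumes "k \<ge> 1" and "n \<ge> 1"
  shows "det (Dmat n k) = monom 1 n * genfib k ((k - 1) * n)"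
proof -
  obtain m where n: "n = Suc m" using assms(2) by (cases n) auto
  have "null_vec k 0 = 1" by (simp add: null_vec_def binomz_def)
  then have "det (Dmat n k) =
      (-1) ^ m * (Dmat n k *\<^sub>v vec n (null_vec k)) $ m * det (mat_delete (Dmat n k) m 0)"
    using n Dmat_mult_null_vec[OF assms(1)]
    by (intro det_by_kernel_column) (simp_all add: Dmat_carrier)
  also have "\<dots> = null_vec k n"
    using n by (simp add: Dmat_mult_null_vec[OF assms(1)] det_Dmat_minor[OF assms(1)] flip: power_add)
  finally show ?thesis using null_vec_eq_genfib[OF assms(1)] by simp
qed

end
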